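(* Let $\ell$ be a positive odd integer with at most $t$ distinct prime factors. Suppose there exist $t+1$ primes $p_1<p_2<\cdots<p_{t+1}$ with $p_1\ge 3$ such that any two of $p_1-1,\dots,p_{t+1}-1$ have no common odd prime factor. Then for every integer $n$ with $p_{t+1}-1\le n\le 2p_1-2$, $\Omega_\ell(n)$ is not a powerful number.
   Context: A positive integer $a$ is called a powerful number if for every prime $p$, $p\mid a$ implies $p^2\mid a$. $\Omega_\ell(n)=\prod_{a=1}^{n}(a^\ell+1)$. *)

theory Defs
  imports "HOL-Computational_Algebra.Primes"
begin

definition powerful :: "nat \<Rightarrow> bool" where
  "powerful a \<longleftrightarrow> a > 0 \<and> (\<forall>p. prime p \<longrightarrow> p dvd a \<longrightarrow> p^2 dvd a)"

definition Omega :: "nat \<Rightarrow> nat \<Rightarrow> nat" where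
  "Omega l n = (\<Prod>a=1..n. a^l + 1)"

end

theory Submission
  imports Defs "HOL-Number_Theory.Number_Theory"
begin

text \<open>One of the primes, say \<open>P\<close>, satisfies \<open>gcd l (P - 1) = 1\<close> and \<open>\<not> P dvd l\<close>: a prime factor
  \<open>q\<close> of the odd number \<open>l\<close> is odd, so it divides at most one \<open>p\<^sub>i - 1\<close>; and if \<open>q = p\<^sub>i\<close>, then \<open>q\<close>
  divides no \<open>p\<^sub>j - 1\<close>, because \<open>p\<^sub>j - 1\<close> is even and smaller than \<open>2 p\<^sub>i\<close>. So each of the at most
  \<open>t\<close> prime factors rules out at most one of the \<open>t + 1\<close> primes.
  For this \<open>P\<close>, \<open>x \<mapsto> x\<^sup>l\<close> is a bijection modulo \<open>P\<close>, so among \<open>1, \<dots>, 2P - 2\<close> only \<open>a = P - 1\<close>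
  satisfies \<open>P dvd a\<^sup>l + 1\<close>, and \<open>(P - 1)\<^sup>l + 1 \<equiv> l P (mod P\<^sup>2)\<close> is not divisible by \<open>P\<^sup>2\<close>.
  Hence \<open>P\<close> divides \<open>\<Omega>\<^sub>l(n)\<close> exactly once.\<close>

lemma add_one_dvd_pow_add_one:
  fixes x :: "'a::comm_ring_1"
  assumes "odd n"
  shows "x + 1 dvd x ^ n + 1"
proof -
  have "x ^ n + 1 = (x + 1) * (\<Sum>i<n. (- x) ^ i)"
    using power_diff_1_eq[of "- x" n] assms by (simp add: algebra_simps)
  then show ?thesis by simp
qed

lemma square_dvd_pow_sub_linear:
  fixes x :: "'a::comm_ring_1"
  shows "x\<^sup>2 dvd (1 + x) ^ n - 1 - of_nat n * x"
proof (induction n)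
  case 0 then show ?case by simp
next
  case (Suc n)
  have "(1 + x) ^ Suc n - 1 - of_nat (Suc n) * x
      = ((1 + x) ^ n - 1 - of_nat n * x) * (1 + x) + x\<^sup>2 * of_nat n"
    by (simp add: algebra_simps power2_eq_square)
  with Suc show ?case by simp
qed

lemma prime_square_dvd_pred_pow_add_one_iff:
  fixes P l :: nat
  assumes "prime P" "odd l"
  shows "P\<^sup>2 dvd (P - 1) ^ l + 1 \<longleftrightarrow> P dvd l"
proof -
  have P0: "int P \<noteq> 0" and P1: "P \<ge> 1"
    using assms(1) prime_ge_1_nat by auto
  have "(int P)\<^sup>2 dvd (1 - int P) ^ l - 1 + int l * int P"
    using square_dvd_pow_sub_linear[of "- int P" l] by simp
  moreover have "(1 - int P) ^ l = - ((int P - 1) ^ l)"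
    using power_minus_odd[OF assms(2), of "int P - 1"] by simp
  ultimately have d: "(int P)\<^sup>2 dvd int l * int P - ((int P - 1) ^ l + 1)"
    by (simp add: algebra_simps)
  have "(int P)\<^sup>2 dvd (int P - 1) ^ l + 1 \<longleftrightarrow> (int P)\<^sup>2 dvd int l * int P"
    using dvd_diff[OF _ d] dvd_add[OF d] by force
  also have "\<dots> \<longleftrightarrow> int P dvd int l"
    using P0 by (simp add: power2_eq_square)
  also have "(int P - 1) ^ l + 1 = int ((P - 1) ^ l + 1)"
    using P1 by (simp add: of_nat_diff)
  finally show ?thesis
    by (simp only: of_nat_power[symmetric] of_nat_dvd_iff)
qed

lemma dvd_less_double_imp_eq:
  fixes d m :: nat
  assumes "d dvd m" "0 < m" "m < 2 * d"
  shows "m = d"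
proof -
  obtain k where k: "m = d * k" using assms(1) by blast
  with assms(2,3) have "0 < k" "k < 2" by auto
  then show ?thesis using k by simp
qed

lemma prime_dvd_pow_add_one_imp_dvd_add_one:
  fixes P l a :: nat
  assumes "prime P" "odd P" "coprime l (P - 1)" "P dvd a ^ l + 1"
  shows "P dvd a + 1"
proof -
  have "l \<noteq> 0"
  proof
    assume "l = 0"
    then have "P = 2" using assms(3) by simp
    then show False using assms(2) by simp
  qed
  then obtain u v where uv: "l * u = (P - 1) * v + 1"
    using bezout_nat[of l "P - 1"] assms(3) by auto
  have "even (P - 1)" using assms(2) by simp
  then have "odd u" using uv by (metis even_mult_iff even_add odd_one)
  have "\<not> P dvd a"
  proof
    assume "P dvd a"
    then have "P dvd a ^ l" using \<open>l \<noteq> 0\<close> by (metis dvd_power dvd_trans gr0I)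
    then have "P dvd 1" using assms(4) by (simp add: dvd_add_right_iff del: One_nat_def)
    then show False using assms(1) by simp
  qed
  then have fermat: "[int a ^ (P - 1) = 1] (mod int P)"
    using fermat_theorem[OF assms(1)] by (metis cong_int_iff of_nat_1 of_nat_power)
  have "int P dvd int (a ^ l + 1)"
    using assms(4) by (simp only: of_nat_dvd_iff)
  then have minus_one: "[int a ^ l = - 1] (mod int P)"
    by (simp add: cong_iff_dvd_diff add.commute)
  have "[int a = (int a ^ (P - 1)) ^ v * int a] (mod int P)"
    using cong_mult[OF cong_pow[OF fermat, of v] cong_refl[of "int a"]] by (simp add: cong_sym)
  also have "(int a ^ (P - 1)) ^ v * int a = int a ^ ((P - 1) * v + 1)"
    by (simp add: power_mult)
  also have "\<dots> = (int a ^ l) ^ u"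
    by (simp only: uv[symmetric] power_mult)
  also have "[\<dots> = (- 1) ^ u] (mod int P)"
    by (rule cong_pow[OF minus_one])
  finally have "[int a = - 1] (mod int P)"
    using \<open>odd u\<close> by simp
  then have "int P dvd int (a + 1)"
    by (simp add: cong_iff_dvd_diff add.commute)
  then show ?thesis
    by (simp only: of_nat_dvd_iff)
qed

lemma not_powerful_Omega_if_prime:
  fixes P l n :: nat
  assumes "prime P" "odd P" "odd l" "coprime l (P - 1)" "\<not> P dvd l"
    and "P - 1 \<le> n" "n \<le> 2 * P - 2"
  shows "\<not> powerful (Omega l n)"
proof
  assume powerful: "powerful (Omega l n)"
  have P1: "P \<ge> 1" using assms(1) prime_ge_1_nat by blast
  define R where "R = (\<Prod>a\<in>{1..n} - {P - 1}. a ^ l + 1)"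
  have "P - 1 \<in> {1..n}"
    using assms(2,6) prime_gt_1_nat[OF assms(1)] by (cases "P = 2") auto
  then have Omega_eq: "Omega l n = ((P - 1) ^ l + 1) * R"
    unfolding Omega_def R_def by (simp add: prod.remove)
  have "int (P - 1) + 1 dvd int (P - 1) ^ l + 1"
    by (rule add_one_dvd_pow_add_one[OF assms(3)])
  then have "int P dvd int ((P - 1) ^ l + 1)"
    using P1 by (simp add: of_nat_diff add.commute)
  then have "P dvd (P - 1) ^ l + 1"
    by (simp only: of_nat_dvd_iff)
  then have "P dvd Omega l n"
    unfolding Omega_eq by (rule dvd_mult2)
  then have "P\<^sup>2 dvd ((P - 1) ^ l + 1) * R"
    using powerful assms(1) unfolding powerful_def Omega_eq[symmetric] by simp
  moreover have "\<not> P dvd R"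
  proof
    assume "P dvd R"
    then have "\<exists>a\<in>{1..n} - {P - 1}. P dvd a ^ l + 1"
      unfolding R_def using assms(1) by (simp add: prime_dvd_prod_iff)
    then obtain a where a: "a \<in> {1..n} - {P - 1}" "P dvd a ^ l + 1" by blast
    then have "P dvd a + 1"
      using prime_dvd_pow_add_one_imp_dvd_add_one assms(1,2,4) by blast
    then have "a + 1 = P"
      using a(1) assms(7) by (intro dvd_less_double_imp_eq) auto
    then show False using a(1) by auto
  qed
  then have "coprime (P\<^sup>2) R"
    using assms(1) by (simp add: prime_imp_coprime)
  ultimately have "P\<^sup>2 dvd (P - 1) ^ l + 1"
    using coprime_dvd_mult_left_iff by blast
  then show False
    using assms(5) prime_square_dvd_pred_pow_add_one_iff[OF assms(1,3)] by blast
qed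

lemma ex_unrelated_if_card_less:
  assumes "finite Q" "card Q < card S"
    and "\<And>q x y. q \<in> Q \<Longrightarrow> x \<in> S \<Longrightarrow> y \<in> S \<Longrightarrow> R q x \<Longrightarrow> R q y \<Longrightarrow> x = y"
  shows "\<exists>x\<in>S. \<forall>q\<in>Q. \<not> R q x"
proof (rule ccontr)
  assume "\<not> ?thesis"
  then have "S = (\<Union>q\<in>Q. {x \<in> S. R q x})" by blast
  then have "card S \<le> (\<Sum>q\<in>Q. card {x \<in> S. R q x})"
    using card_UN_le[OF assms(1)] by metis
  also have "\<dots> \<le> (\<Sum>q\<in>Q. 1)"
  proof (rule sum_mono)
    fix q assume "q \<in> Q"
    have "finite S"
      by (rule card_ge_0_finite) (use assms(2) in linarith)
    then show "card {x \<in> S. R q x} \<le> 1"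
      using assms(3)[OF \<open>q \<in> Q\<close>] by (simp add: card_le_Suc0_iff_eq)
  qed
  finally show False using assms(2) by simp
qed

lemma prime_not_dvd_pred_prime:
  fixes P Q :: nat
  assumes "prime P" "odd P" "prime Q" "odd Q" "Q < 2 * P"
  shows "\<not> P dvd Q - 1"
proof
  assume "P dvd Q - 1"
  moreover have "0 < Q - 1" using assms(3,4) prime_gt_1_nat by (cases "Q = 2") auto
  ultimately have "Q - 1 = P"
    using assms(5) by (intro dvd_less_double_imp_eq) auto
  moreover have "even (Q - 1)" using assms(4) by simp
  ultimately show False using assms(2) by simp
qed

lemma ex_prime_coprime_pred:
  fixes l :: nat and S :: "nat set"
  assumes "odd l" "card (prime_factors l) < card S"
    and odd_primes: "\<And>P. P \<in> S \<Longrightarrow> prime P \<and> odd P"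
    and close: "\<And>P Q. P \<in> S \<Longrightarrow> Q \<in> S \<Longrightarrow> Q < 2 * P"
    and disjoint: "\<And>P Q q. P \<in> S \<Longrightarrow> Q \<in> S \<Longrightarrow> P \<noteq> Q \<Longrightarrow> prime q \<Longrightarrow> odd q \<Longrightarrow>
           q dvd P - 1 \<Longrightarrow> q dvd Q - 1 \<Longrightarrow> False"
  shows "\<exists>P\<in>S. coprime l (P - 1) \<and> \<not> P dvd l"
proof -
  have no_dvd: "\<not> P dvd Q - 1" if "P \<in> S" "Q \<in> S" for P Q
    using prime_not_dvd_pred_prime odd_primes[OF that(1)] odd_primes[OF that(2)] close[OF that]
    by blast
  let ?R = "\<lambda>q P. q dvd P - 1 \<or> q = P"
  have "\<exists>P\<in>S. \<forall>q\<in>prime_factors l. \<not> ?R q P"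
  proof (rule ex_unrelated_if_card_less[OF _ assms(2)])
    fix q P Q assume q: "q \<in> prime_factors l" and PQ: "P \<in> S" "Q \<in> S" "?R q P" "?R q Q"
    then have "prime q" "q dvd l" by auto
    then have "odd q" using assms(1) by (metis dvd_trans)
    show "P = Q"
    proof (rule ccontr)
      assume "P \<noteq> Q"
      then have "\<not> (q dvd P - 1 \<and> q dvd Q - 1)"
        using disjoint[OF PQ(1,2)] \<open>prime q\<close> \<open>odd q\<close> by blast
      moreover have "\<not> (q = P \<and> q dvd Q - 1)" "\<not> (q dvd P - 1 \<and> q = Q)"
        using no_dvd[OF PQ(1,2)] no_dvd[OF PQ(2,1)] by auto
      ultimately show False using PQ(3,4) \<open>P \<noteq> Q\<close> by blast
    qed
  qed simp
  then obtain P where P: "P \<in> S" "\<forall>q\<in>prime_factors l. \<not> ?R q P" by blast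
  have "l > 0" using assms(1) by (rule odd_pos)
  have "coprime l (P - 1)"
  proof (rule ccontr)
    assume "\<not> coprime l (P - 1)"
    then obtain c where c: "c dvd l" "c dvd P - 1" "\<not> is_unit c"
      by (rule not_coprimeE)
    then obtain q where "prime q" "q dvd c"
      using prime_factor_nat by auto
    with c have "q \<in> prime_factors l" "q dvd P - 1"
      using \<open>l > 0\<close> by (auto simp: in_prime_factors_iff intro: dvd_trans)
    then show False using P(2) by blast
  qed
  moreover have "\<not> P dvd l"
    using P odd_primes[OF P(1)] \<open>l > 0\<close> by (auto simp: in_prime_factors_iff)
  ultimately show ?thesis using P(1) by blast
qed

lemma not_powerful_Omega_if_many_primes:
  fixes l n :: nat and S :: "nat set"
  assumes "odd l" "card (prime_factors l) < card S"
    and primes: "\<And>P. P \<in> S \<Longrightarrow> prime P \<and> odd P \<and> P - 1 \<le> n \<and> n \<le> 2 * P - 2"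
    and disjoint: "\<And>P Q q. P \<in> S \<Longrightarrow> Q \<in> S \<Longrightarrow> P \<noteq> Q \<Longrightarrow> prime q \<Longrightarrow> odd q \<Longrightarrow>
           q dvd P - 1 \<Longrightarrow> q dvd Q - 1 \<Longrightarrow> False"
  shows "\<not> powerful (Omega l n)"
proof -
  have "Q < 2 * P" if "P \<in> S" "Q \<in> S" for P Q
  proof -
    have "prime Q" "Q - 1 \<le> n" "n \<le> 2 * P - 2"
      using primes[OF that(1)] primes[OF that(2)] by auto
    then show ?thesis using prime_gt_1_nat[of Q] by linarith
  qed
  then obtain P where "P \<in> S" "coprime l (P - 1)" "\<not> P dvd l"
    using ex_prime_coprime_pred[OF assms(1,2)] primes disjoint by blast
  then show ?thesis
    using not_powerful_Omega_if_prime[OF _ _ assms(1)] primes by blast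
qed

theorem lemma4:
  fixes l t :: nat and p :: "nat \<Rightarrow> nat" and n :: nat
  assumes "l > 0" and "odd l"
    and "card (prime_factors l) \<le> t"
    and "\<And>i. i \<in> {1..t+1} \<Longrightarrow> prime (p i)"
    and "\<And>i j. i \<in> {1..t+1} \<Longrightarrow> j \<in> {1..t+1} \<Longrightarrow> i < j \<Longrightarrow> p i < p j"
    and "p 1 \<ge> 3"
    and "\<And>i j q. i \<in> {1..t+1} \<Longrightarrow> j \<in> {1..t+1} \<Longrightarrow> i \<noteq> j \<Longrightarrow>
           prime q \<Longrightarrow> odd q \<Longrightarrow> \<not> (q dvd (p i - 1) \<and> q dvd (p j - 1))"
    and "p (t+1) - 1 \<le> n" and "n \<le> 2 * p 1 - 2"
  shows "\<not> powerful (Omega l n)"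
proof (rule not_powerful_Omega_if_many_primes[OF assms(2), of "p ` {1..t+1}"])
  have mono: "strict_mono_on {1..t+1} p"
    using assms(5) by (intro strict_mono_onI)
  show "card (prime_factors l) < card (p ` {1..t+1})"
    using assms(3) card_image[OF strict_mono_on_imp_inj_on[OF mono]] by simp
  show "prime P \<and> odd P \<and> P - 1 \<le> n \<and> n \<le> 2 * P - 2" if P: "P \<in> p ` {1..t+1}" for P
  proof -
    obtain i where i: "i \<in> {1..t+1}" "P = p i" using P by blast
    then have "p 1 \<le> P" "P \<le> p (t+1)" using strict_mono_on_leD[OF mono] by auto
    then show ?thesis using i assms(4,6,8,9) prime_odd_nat[of P] by auto
  qed
  show False if "P \<in> p ` {1..t+1}" "Q \<in> p ` {1..t+1}" "P \<noteq> Q" "prime q" "odd q"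
    "q dvd P - 1" "q dvd Q - 1" for P Q q
    using that assms(7) by blast
qed

end
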